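(* Let $u,v>0$ and $0<a,b\le 1$, and consider the map $(x,y)\mapsto\big((1-a)x+auy(1-y),\ (1-b)y+bvx(1-x)\big)$ on $\mathbb{R}^2$. If $uv\ge 1$, then every (real) equilibrium $(x^*,y^* )$ of this map lies in $[0,1]\times[0,1]$.
   Context: An equilibrium of the map is a real fixed point $(x^*,y^* )$; equivalently (since $a,b>0$) a real solution of $x^*=uy^*(1-y^* )$, $y^*=vx^*(1-x^* )$. This is Kopel's duopoly map. *)

theory Defs
  imports Complex_Main
begin

definition kopel_map :: "real \<Rightarrow> real \<Rightarrow> real \<Rightarrow> real \<Rightarrow> real \<times> real \<Rightarrow> real \<times> real" where
  "kopel_map u v a b = (\<lambda>(x, y). ((1 - a) * x + a * u * y * (1 - y), (1 - b) * y + b * v * x * (1 - x)))"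

end

theory Submission
  imports Defs
begin

text \<open>Since \<open>a, b > 0\<close>, an equilibrium solves \<open>x = u y (1 - y)\<close>, \<open>y = v x (1 - x)\<close>.
  Off \<open>[0,1]\<close> the logistic map \<open>t \<mapsto> c t (1 - t)\<close> (\<open>c > 0\<close>) is negative, and below \<open>0\<close>
  it lies strictly below \<open>t \<mapsto> c t\<close>. So if one coordinate were negative, both would be,
  and \<open>x < u y < u v x \<le> x\<close> because \<open>u v \<ge> 1\<close>. Hence both are nonnegative, and neither
  exceeds \<open>1\<close>, for otherwise the other coordinate would be negative.\<close>

lemma kopel_map_fixed_point_iff:
  fixes u v a b x y :: real
  assumes "a \<noteq> 0" and "b \<noteq> 0"
  shows "kopel_map u v a b (x, y) = (x, y) \<longleftrightarrow> x = u * y * (1 - y) \<and> y = v * x * (1 - x)"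
proof -
  have "(1 - a) * x + a * u * y * (1 - y) = x \<longleftrightarrow> a * (u * y * (1 - y) - x) = 0"
   and "(1 - b) * y + b * v * x * (1 - x) = y \<longleftrightarrow> b * (v * x * (1 - x) - y) = 0"
    by (simp_all add: algebra_simps)
  then show ?thesis
    using assms by (auto simp: kopel_map_def)
qed

lemma logistic_neg_outside_unit:
  fixes c t :: real
  assumes "c > 0" and "t \<notin> {0..1}"
  shows "c * t * (1 - t) < 0"
proof -
  have "t * (1 - t) < 0"
    using assms(2) by (auto simp: mult_neg_pos mult_pos_neg)
  then show ?thesis
    using assms(1) by (simp add: mult.assoc mult_pos_neg)
qed

lemma logistic_less_linear_of_neg:
  fixes c t :: real
  assumes "c > 0" and "t < 0"
  shows "c * t * (1 - t) < c * t"
proof -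
  have "c * t * (1 - t) - c * t = - (c * t\<^sup>2)"
    by (simp add: algebra_simps power2_eq_square)
  also have "\<dots> < 0"
    using assms by simp
  finally show ?thesis by simp
qed

lemma coupled_logistic_nonneg:
  fixes u v x y :: real
  assumes "u > 0" and "v > 0" and "u * v \<ge> 1"
    and x: "x = u * y * (1 - y)" and y: "y = v * x * (1 - x)"
  shows "x \<ge> 0"
proof (rule ccontr)
  assume "\<not> x \<ge> 0"
  then have "x < 0" by simp
  then have "y < 0"
    using logistic_neg_outside_unit[OF \<open>v > 0\<close>, of x] y by simp
  have "x < u * y"
    using logistic_less_linear_of_neg[OF \<open>u > 0\<close> \<open>y < 0\<close>] x by simp
  also have "\<dots> < u * (v * x)"
    using logistic_less_linear_of_neg[OF \<open>v > 0\<close> \<open>x < 0\<close>] y \<open>u > 0\<close> by simp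
  also have "\<dots> = (u * v) * x"
    by simp
  also have "\<dots> \<le> 1 * x"
    using \<open>u * v \<ge> 1\<close> \<open>x < 0\<close> by (intro mult_right_mono_neg) auto
  finally show False by simp
qed

theorem proposition1:
  fixes u v a b x y :: real
  assumes "u > 0" and "v > 0" and "0 < a" and "a \<le> 1" and "0 < b" and "b \<le> 1"
    and "u * v \<ge> 1"
    and "kopel_map u v a b (x, y) = (x, y)"
  shows "x \<in> {0..1} \<and> y \<in> {0..1}"
proof -
  have "x = u * y * (1 - y) \<and> y = v * x * (1 - x)"
    using assms(3,5) by (intro kopel_map_fixed_point_iff[THEN iffD1, OF _ _ assms(8)]) auto
  then have x: "x = u * y * (1 - y)" and y: "y = v * x * (1 - x)"
    by blast+
  have "x \<ge> 0"
    using coupled_logistic_nonneg[OF assms(1,2,7) x y] .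
  moreover have "y \<ge> 0"
    using assms(7) by (intro coupled_logistic_nonneg[OF assms(2,1) _ y x]) (simp add: mult.commute)
  ultimately show ?thesis
    using logistic_neg_outside_unit[OF assms(2), of x] logistic_neg_outside_unit[OF assms(1), of y]
    by (metis x y not_less)
qed

end
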